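(* Let $\mathcal{D}$ be a fixed distribution supported on $[0,1]$ (not depending on $n,m$) with mean, variance, and largest median $\nu=\sup\{y:\Pr_{x\sim\mathcal{D}}(x\le y)\le\frac12\}$. Then for every $\epsilon>0$ there exists $n_0$ such that for all $n\ge n_0$ and all $m$, binomial voting is a $(\frac12-\epsilon)\nu$-expected-distortion-maximizing rule for $\mathcal{D}$. Furthermore, if $\mathcal{D}$ has a continuously differentiable CDF $F$ with $\inf_{x\in(0,1)}\frac{dF(x)}{dx}>0$, then for every $\epsilon>0$ there exists $m_0$ such that the same conclusion holds for all $m\ge m_0$ and all $n$.
   Context: There are $n$ voters and $m$ alternatives $A=\{1,\dots,m\}$. A preference profile $\sigma$ consists of a ranking of $A$ for each voter; position $1$ is the top. Given $\mathcal{D}$ and $\sigma$, a random utility profile $u$ consistent with $\sigma$ is generated as follows: independently for each voter $i$, draw $m$ i.i.d. samples from $\mathcal{D}$ and assign them, from highest to lowest, to the alternatives in the order of voter $i$'s ranking. The social welfare of $j$ is $\mathrm{sw}(j,u)=\sum_i u_{ij}$; expectations are over $u$. The distortion of $j$ at $\sigma$ is $\mathrm{dist}(j,\sigma)=\mathrm{sw}(j,u)/\max_{k\in A}\mathrm{sw}(k,u)$. A voting rule $f$ (mapping profiles to alternatives) is an $\alpha$-expected-distortion-maximizing rule for $\mathcal{D}$ if for every profile $\sigma$, $\mathbb{E}[\mathrm{dist}(f(\sigma),\sigma)]\ge\alpha\max_{j\in A}\mathbb{E}[\mathrm{dist}(j,\sigma)]$. Binomial voting is the scoring rule in which each voter gives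 $\sum_{\ell=k}^m\binom{m}{\ell}$ points to the alternative she ranks in position $k$; it selects an alternative with the largest total score (ties broken arbitrarily). *)

theory Defs
  imports "HOL-Probability.Probability"
begin

text \<open>Voters are 0..<n, alternatives are 0..<m, positions are 0..<m (0 = top).
  A profile sigma maps voter i and position k to the alternative voter i ranks at k.\<close>

definition is_profile :: "nat \<Rightarrow> nat \<Rightarrow> (nat \<Rightarrow> nat \<Rightarrow> nat) \<Rightarrow> bool" where
  "is_profile n m \<sigma> \<longleftrightarrow> (\<forall>i<n. bij_betw (\<sigma> i) {..<m} {..<m})"

definition rank_pos :: "nat \<Rightarrow> (nat \<Rightarrow> nat) \<Rightarrow> nat \<Rightarrow> nat" where
  "rank_pos m r j = (THE k. k < m \<and> r k = j)"

definition sample_space :: "real measure \<Rightarrow> nat \<Rightarrow> nat \<Rightarrow> (nat \<times> nat \<Rightarrow> real) measure" where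
  "sample_space D n m = PiM ({..<n} \<times> {..<m}) (\<lambda>_. D)"

definition desc_stat :: "nat \<Rightarrow> (nat \<times> nat \<Rightarrow> real) \<Rightarrow> nat \<Rightarrow> nat \<Rightarrow> real" where
  "desc_stat m \<omega> i k = rev (sort (map (\<lambda>l. \<omega> (i, l)) [0..<m])) ! k"

text \<open>Utility of voter i for alternative j: samples assigned from highest to lowest
  in the order of voter i's ranking.\<close>
definition utility :: "nat \<Rightarrow> (nat \<Rightarrow> nat \<Rightarrow> nat) \<Rightarrow> (nat \<times> nat \<Rightarrow> real) \<Rightarrow> nat \<Rightarrow> nat \<Rightarrow> real" where
  "utility m \<sigma> \<omega> i j = desc_stat m \<omega> i (rank_pos m (\<sigma> i) j)"

definition sw :: "nat \<Rightarrow> nat \<Rightarrow> (nat \<Rightarrow> nat \<Rightarrow> nat) \<Rightarrow> (nat \<times> nat \<Rightarrow> real) \<Rightarrow> nat \<Rightarrow> real" where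
  "sw n m \<sigma> \<omega> j = (\<Sum>i<n. utility m \<sigma> \<omega> i j)"

definition distortion :: "nat \<Rightarrow> nat \<Rightarrow> (nat \<Rightarrow> nat \<Rightarrow> nat) \<Rightarrow> (nat \<times> nat \<Rightarrow> real) \<Rightarrow> nat \<Rightarrow> real" where
  "distortion n m \<sigma> \<omega> j = sw n m \<sigma> \<omega> j / Max ((sw n m \<sigma> \<omega>) ` {..<m})"

definition expected_dist :: "real measure \<Rightarrow> nat \<Rightarrow> nat \<Rightarrow> (nat \<Rightarrow> nat \<Rightarrow> nat) \<Rightarrow> nat \<Rightarrow> real" where
  "expected_dist D n m \<sigma> j = (\<integral>\<omega>. distortion n m \<sigma> \<omega> j \<partial>(sample_space D n m))"

definition edm_rule :: "real measure \<Rightarrow> nat \<Rightarrow> nat \<Rightarrow> real \<Rightarrow> ((nat \<Rightarrow> nat \<Rightarrow> nat) \<Rightarrow> nat) \<Rightarrow> bool" where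
  "edm_rule D n m \<alpha> f \<longleftrightarrow>
     (\<forall>\<sigma>. is_profile n m \<sigma> \<longrightarrow>
        expected_dist D n m \<sigma> (f \<sigma>) \<ge> \<alpha> * Max ((expected_dist D n m \<sigma>) ` {..<m}))"

definition binom_points :: "nat \<Rightarrow> nat \<Rightarrow> nat" where
  "binom_points m k = (\<Sum>l\<in>{k+1..m}. m choose l)"

definition binom_score :: "nat \<Rightarrow> nat \<Rightarrow> (nat \<Rightarrow> nat \<Rightarrow> nat) \<Rightarrow> nat \<Rightarrow> nat" where
  "binom_score n m \<sigma> j = (\<Sum>i<n. binom_points m (rank_pos m (\<sigma> i) j))"

definition is_binomial_rule :: "nat \<Rightarrow> nat \<Rightarrow> ((nat \<Rightarrow> nat \<Rightarrow> nat) \<Rightarrow> nat) \<Rightarrow> bool" where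
  "is_binomial_rule n m f \<longleftrightarrow>
     (\<forall>\<sigma>. is_profile n m \<sigma> \<longrightarrow>
        f \<sigma> < m \<and> (\<forall>j<m. binom_score n m \<sigma> j \<le> binom_score n m \<sigma> (f \<sigma>)))"

definition largest_median :: "real measure \<Rightarrow> real" where
  "largest_median D = Sup {y. measure D {..y} \<le> 1/2}"

definition cdf_of :: "real measure \<Rightarrow> real \<Rightarrow> real" where
  "cdf_of D x = measure D {..x}"

end

theory Submission
  imports Defs
begin

(* Fix a threshold t \<ge> 0 with F(t) \<le> 1/2, so that each sample exceeds t with probability
   p \<ge> 1/2.  Voter i's utility for the alternative she ranks at (0-indexed) position k is at
   least t as soon as more than k of her m samples exceed t; the number of such samples is
   Bin(m, p)-distributed, so this happens with probability
   P(Bin(m, p) > k) \<ge> P(Bin(m, 1/2) > k) = binom_points m k / 2^m.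
   As the distortion is at least sw/n, the expected distortion of an alternative is at least
   t / (n 2^m) times its binomial score, and the binomial winner's score is at least the average
   n 2^(m-1).  So the winner has expected distortion at least t/2, hence at least \<nu>/2 after taking
   the supremum over t, while no alternative has expected distortion above 1.  This holds for all
   n, m \<ge> 1. *)

lemma rev_sort_nth_upward_closed_iff:
  fixes xs :: "'a::linorder list"
  assumes up: "\<And>x y. P x \<Longrightarrow> x \<le> y \<Longrightarrow> P y" and k: "k < length xs"
  shows "P (rev (sort xs) ! k) \<longleftrightarrow> k < length (filter P xs)"
proof -
  define ys where "ys = rev (sort xs)"
  define I where "I = {i. i < length ys \<and> P (ys ! i)}"
  have len: "length ys = length xs" by (simp add: ys_def)
  have desc: "ys ! j \<le> ys ! i" if "i \<le> j" "j < length ys" for i j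
    using that sorted_nth_mono[of "sort xs" "length xs - Suc j" "length xs - Suc i"]
    by (simp add: ys_def rev_nth)
  have "length (filter P xs) = length (filter P ys)"
    by (simp add: ys_def rev_filter[symmetric] filter_sort)
  also have "\<dots> = card I" unfolding I_def by (rule length_filter_conv_card)
  finally have count: "length (filter P xs) = card I" .
  have I_down: "i \<in> I" if "j \<in> I" "i \<le> j" for i j
    using that up desc unfolding I_def by fastforce
  have k_in_I: "k \<in> I \<longleftrightarrow> P (rev (sort xs) ! k)" using k len by (simp add: I_def ys_def)
  show ?thesis
  proof
    assume "P (rev (sort xs) ! k)"
    hence "{..k} \<subseteq> I" using k_in_I I_down by auto
    hence "card {..k} \<le> card I" by (intro card_mono) (auto simp: I_def)
    thus "k < length (filter P xs)" using count by simp
  next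
    assume "k < length (filter P xs)"
    show "P (rev (sort xs) ! k)"
    proof (rule ccontr)
      assume "\<not> P (rev (sort xs) ! k)"
      have "I \<subseteq> {..<k}"
      proof
        fix i assume "i \<in> I"
        show "i \<in> {..<k}"
        proof (rule ccontr)
          assume "i \<notin> {..<k}"
          hence "k \<in> I" using I_down \<open>i \<in> I\<close> by simp
          thus False using k_in_I \<open>\<not> P (rev (sort xs) ! k)\<close> by simp
        qed
      qed
      hence "card I \<le> k" using card_mono[of "{..<k}" I] by simp
      thus False using \<open>k < length (filter P xs)\<close> count by simp
    qed
  qed
qed

lemma desc_stat_upward_closed_iff:
  assumes "\<And>x y. P x \<Longrightarrow> x \<le> y \<Longrightarrow> P y" and "k < m"
  shows "P (desc_stat m \<omega> i k) \<longleftrightarrow> k < card {l. l < m \<and> P (\<omega> (i, l))}"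
  using rev_sort_nth_upward_closed_iff[of P k "map (\<lambda>l. \<omega> (i, l)) [0..<m]"] assms
  by (simp add: desc_stat_def length_filter_conv_card cong: conj_cong)

lemma desc_stat_mem:
  assumes "k < m"
  shows "desc_stat m \<omega> i k \<in> (\<lambda>l. \<omega> (i, l)) ` {..<m}"
proof -
  have "desc_stat m \<omega> i k \<in> set (rev (sort (map (\<lambda>l. \<omega> (i, l)) [0..<m])))"
    unfolding desc_stat_def using assms by (intro nth_mem) simp
  thus ?thesis by auto
qed

lemma borel_measurable_sample_space_component:
  assumes "sets D = sets borel" "i < n" "l < m"
  shows "(\<lambda>\<omega>. \<omega> (i, l)) \<in> borel_measurable (sample_space D n m)"
  using measurable_component_singleton[of "(i, l)" "{..<n} \<times> {..<m}" "\<lambda>_. D"] assms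
  by (simp add: sample_space_def measurable_cong_sets[OF refl assms(1)])

lemma borel_measurable_desc_stat:
  assumes "sets D = sets borel" "i < n" "k < m"
  shows "(\<lambda>\<omega>. desc_stat m \<omega> i k) \<in> borel_measurable (sample_space D n m)"
proof (subst borel_measurable_iff_greater, intro allI)
  fix a :: real
  let ?S = "sample_space D n m"
  have count: "card {l. l < m \<and> a < \<omega> (i, l)} = (\<Sum>l<m. indicator {a<..} (\<omega> (i, l)) :: real)" for \<omega>
    by (simp add: indicator_def sum.If_cases Collect_conj_eq Int_commute lessThan_def)
  have "(\<lambda>\<omega>. \<Sum>l<m. indicator {a<..} (\<omega> (i, l)) :: real) \<in> borel_measurable ?S"
    by (intro borel_measurable_sum measurable_compose[OF
          borel_measurable_sample_space_component[OF assms(1,2)] borel_measurable_indicator]) auto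
  hence "{\<omega> \<in> space ?S. real k < card {l. l < m \<and> a < \<omega> (i, l)}} \<in> sets ?S"
    unfolding count by measurable
  moreover have "{\<omega> \<in> space ?S. a < desc_stat m \<omega> i k} =
      {\<omega> \<in> space ?S. real k < card {l. l < m \<and> a < \<omega> (i, l)}}"
    using desc_stat_upward_closed_iff[of "\<lambda>x. a < x"] assms by auto
  ultimately show "{\<omega> \<in> space ?S. a < desc_stat m \<omega> i k} \<in> sets ?S" by (simp only:)
qed

definition binomial_tail :: "real \<Rightarrow> 'a set \<Rightarrow> nat \<Rightarrow> real" where
  "binomial_tail p M r =
     (\<Sum>A\<in>Pow M. if r \<le> card A then (\<Prod>l\<in>M. if l \<in> A then p else 1 - p) else 0)"

lemma binomial_tail_empty: "binomial_tail p {} r = (if r = 0 then 1 else 0)"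
  by (simp add: binomial_tail_def)

lemma binomial_tail_antimono:
  assumes "0 \<le> p" "p \<le> 1" "r' \<le> r"
  shows "binomial_tail p M r \<le> binomial_tail p M r'"
  unfolding binomial_tail_def using assms by (intro sum_mono) (auto intro!: prod_nonneg)

lemma binomial_tail_insert:
  assumes "finite M" "x \<notin> M"
  shows "binomial_tail p (insert x M) r =
           (1 - p) * binomial_tail p M r + p * binomial_tail p M (r - 1)"
proof -
  let ?w = "\<lambda>N A. \<Prod>l\<in>N. if l \<in> A then p else 1 - p"
  let ?g = "\<lambda>A. if r \<le> card A then ?w (insert x M) A else 0"
  have "binomial_tail p (insert x M) r = sum ?g (Pow M) + sum ?g (insert x ` Pow M)"
    unfolding binomial_tail_def Pow_insert using assms by (intro sum.union_disjoint) auto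
  also have "sum ?g (insert x ` Pow M) = sum (?g \<circ> insert x) (Pow M)"
    using assms by (intro sum.reindex) (auto simp: inj_on_def)
  also have "sum ?g (Pow M) = (1 - p) * binomial_tail p M r"
    unfolding binomial_tail_def sum_distrib_left
    using assms by (intro sum.cong refl) (auto simp: prod.insert)
  also have "sum (?g \<circ> insert x) (Pow M) = p * binomial_tail p M (r - 1)"
    unfolding binomial_tail_def sum_distrib_left
  proof (intro sum.cong refl)
    fix A assume A: "A \<in> Pow M"
    hence "finite A" "x \<notin> A" using assms by (auto intro: finite_subset)
    moreover have "?w M (insert x A) = ?w M A"
      using assms by (intro prod.cong refl) auto
    ultimately show "(?g \<circ> insert x) A = p * (if r - 1 \<le> card A then ?w M A else 0)"
      using assms by (auto simp: prod.insert)
  qed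
  finally show ?thesis .
qed

lemma binomial_tail_mono:
  assumes "finite M" "0 \<le> p" "p \<le> q" "q \<le> 1"
  shows "binomial_tail p M r \<le> binomial_tail q M r"
  using assms(1)
proof (induction M arbitrary: r rule: finite_induct)
  case empty
  show ?case by (simp add: binomial_tail_empty)
next
  case (insert x M)
  define a where "a = binomial_tail p M r"
  define b where "b = binomial_tail p M (r - 1)"
  have "a \<le> b" unfolding a_def b_def using assms by (intro binomial_tail_antimono) auto
  hence "0 \<le> (q - p) * (b - a)" using assms by simp
  moreover have "(1 - q) * a + q * b - ((1 - p) * a + p * b) = (q - p) * (b - a)"
    by (simp add: algebra_simps)
  ultimately have "(1 - p) * a + p * b \<le> (1 - q) * a + q * b" by linarith
  also have "\<dots> \<le> (1 - q) * binomial_tail q M r + q * binomial_tail q M (r - 1)"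
    unfolding a_def b_def using insert.IH assms by (intro add_mono mult_left_mono) auto
  finally show ?case using insert by (simp add: binomial_tail_insert a_def b_def)
qed

lemma binomial_tail_half:
  assumes "finite M"
  shows "binomial_tail (1/2) M r = card {A \<in> Pow M. r \<le> card A} / 2 ^ card M"
proof -
  have half: "(\<Prod>l\<in>M. if l \<in> A then 1/2 else 1 - 1/2) = (1/2 :: real) ^ card M" for A
    by (subst prod.cong[OF refl, of _ _ "\<lambda>_. 1/2"]) auto
  have "binomial_tail (1/2) M r = (\<Sum>A\<in>Pow M. if r \<le> card A then (1/2 :: real) ^ card M else 0)"
    unfolding binomial_tail_def by (intro sum.cong refl) (simp add: half)
  also have "\<dots> = card {A \<in> Pow M. r \<le> card A} / 2 ^ card M"
    using assms by (simp add: sum.If_cases power_one_over Int_def conj_commute)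
  finally show ?thesis .
qed

lemma binom_points_eq_card:
  "binom_points m k = card {A \<in> Pow {..<m}. Suc k \<le> card A}"
proof -
  have eq: "{A \<in> Pow {..<m}. Suc k \<le> card A} = (\<Union>l\<in>{k+1..m}. {A. A \<subseteq> {..<m} \<and> card A = l})"
    using card_mono[of "{..<m}"] by fastforce
  have "card {A \<in> Pow {..<m}. Suc k \<le> card A} = (\<Sum>l\<in>{k+1..m}. card {A. A \<subseteq> {..<m} \<and> card A = l})"
    unfolding eq by (intro card_UN_disjoint) (auto intro: finite_subset)
  thus ?thesis by (simp add: binom_points_def n_subsets)
qed

lemma sum_upper_partial_sums:
  "(\<Sum>k<N. \<Sum>l\<in>{Suc k..N}. c l) = (\<Sum>l\<le>N. l * c l :: nat)"
proof (induction N)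
  case 0
  show ?case by simp
next
  case (Suc N)
  have "(\<Sum>k<Suc N. \<Sum>l\<in>{Suc k..Suc N}. c l) = (\<Sum>k<Suc N. (\<Sum>l\<in>{Suc k..N}. c l) + c (Suc N))"
    by (intro sum.cong refl) (simp add: sum.atLeast_Suc_atMost_Suc_shift)
  also have "\<dots> = (\<Sum>k<Suc N. \<Sum>l\<in>{Suc k..N}. c l) + Suc N * c (Suc N)"
    by (simp add: sum.distrib)
  also have "(\<Sum>k<Suc N. \<Sum>l\<in>{Suc k..N}. c l) = (\<Sum>k<N. \<Sum>l\<in>{Suc k..N}. c l)"
    by simp
  finally show ?case using Suc by simp
qed

lemma sum_binom_points: "(\<Sum>k<m. binom_points m k) = m * 2 ^ (m - 1)"
  using sum_upper_partial_sums[where N=m and c="\<lambda>l. m choose l"]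
  by (simp add: binom_points_def choose_linear_sum)

lemma prob_space_sample_space: "prob_space D \<Longrightarrow> prob_space (sample_space D n m)"
  unfolding sample_space_def by (intro prob_space_PiM) auto

definition pattern_event ::
    "real measure \<Rightarrow> nat \<Rightarrow> nat \<Rightarrow> real set \<Rightarrow> nat \<Rightarrow> nat set \<Rightarrow> (nat \<times> nat \<Rightarrow> real) set" where
  "pattern_event D n m B i A = prod_emb ({..<n} \<times> {..<m}) (\<lambda>_. D) ({i} \<times> {..<m})
     (PiE ({i} \<times> {..<m}) (\<lambda>(_, l). if l \<in> A then B else - B))"

lemma mem_pattern_event_iff:
  "\<omega> \<in> pattern_event D n m B i A \<longleftrightarrow>
     \<omega> \<in> space (sample_space D n m) \<and> (\<forall>l<m. \<omega> (i, l) \<in> B \<longleftrightarrow> l \<in> A)"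
  unfolding pattern_event_def prod_emb_iff sample_space_def space_PiM
  by (auto simp: PiE_iff split: if_splits)

lemma pattern_event_sets:
  assumes "sets D = sets borel" "B \<in> sets borel" "i < n"
  shows "pattern_event D n m B i A \<in> sets (sample_space D n m)"
  unfolding pattern_event_def sample_space_def using assms by (intro sets_PiM_I) auto

lemma measure_pattern_event:
  assumes D: "prob_space D" "sets D = sets borel" and B: "B \<in> sets borel" and i: "i < n"
  shows "measure (sample_space D n m) (pattern_event D n m B i A) =
           (\<Prod>l<m. if l \<in> A then measure D B else 1 - measure D B)"
proof -
  interpret D: prob_space D by (fact D(1))
  let ?B = "\<lambda>(_ :: nat, l). if l \<in> A then B else - B"
  have compl: "measure D (- B) = 1 - measure D B"
    using D.prob_compl[of B] B D(2) sets_eq_imp_space_eq[OF D(2)] by (simp add: Compl_eq_Diff_UNIV)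
  have B_sets: "?B j \<in> sets D" for j
    using B D(2) by (auto simp: borel_comp split: prod.split)
  have "emeasure (sample_space D n m) (pattern_event D n m B i A) =
      (\<Prod>j\<in>{i} \<times> {..<m}. emeasure D (?B j))"
    unfolding pattern_event_def sample_space_def
    using D(1) B_sets i by (intro emeasure_PiM_emb) auto
  also have "\<dots> = ennreal (\<Prod>j\<in>{i} \<times> {..<m}. measure D (?B j))"
    by (subst prod_ennreal[symmetric]) (auto simp: D.emeasure_eq_measure)
  finally have "measure (sample_space D n m) (pattern_event D n m B i A) =
      (\<Prod>j\<in>{i} \<times> {..<m}. measure D (?B j))"
    by (simp add: measure_def prod_nonneg)
  also have "\<dots> = (\<Prod>l<m. measure D (?B (i, l)))"
  proof -
    have "{i} \<times> {..<m} = Pair i ` {..<m}" by auto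
    thus ?thesis by (simp add: prod.reindex inj_on_def)
  qed
  also have "\<dots> = (\<Prod>l<m. if l \<in> A then measure D B else 1 - measure D B)"
    by (intro prod.cong refl) (simp add: compl)
  finally show ?thesis .
qed

definition count_ge_event ::
    "real measure \<Rightarrow> nat \<Rightarrow> nat \<Rightarrow> real set \<Rightarrow> nat \<Rightarrow> nat \<Rightarrow> (nat \<times> nat \<Rightarrow> real) set" where
  "count_ge_event D n m B i r =
     {\<omega> \<in> space (sample_space D n m). r \<le> card {l. l < m \<and> \<omega> (i, l) \<in> B}}"

lemma count_ge_event_eq_Union:
  "count_ge_event D n m B i r = (\<Union>A\<in>{A \<in> Pow {..<m}. r \<le> card A}. pattern_event D n m B i A)"
proof (intro set_eqI iffI)
  fix \<omega> assume "\<omega> \<in> count_ge_event D n m B i r"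
  thus "\<omega> \<in> (\<Union>A\<in>{A \<in> Pow {..<m}. r \<le> card A}. pattern_event D n m B i A)"
    by (intro UN_I[of "{l. l < m \<and> \<omega> (i, l) \<in> B}"])
      (auto simp: count_ge_event_def mem_pattern_event_iff)
next
  fix \<omega> assume "\<omega> \<in> (\<Union>A\<in>{A \<in> Pow {..<m}. r \<le> card A}. pattern_event D n m B i A)"
  then obtain A where "A \<subseteq> {..<m}" "r \<le> card A" "\<omega> \<in> space (sample_space D n m)"
      "\<forall>l<m. \<omega> (i, l) \<in> B \<longleftrightarrow> l \<in> A"
    by (auto simp: mem_pattern_event_iff)
  moreover from this have "{l. l < m \<and> \<omega> (i, l) \<in> B} = A" by auto
  ultimately show "\<omega> \<in> count_ge_event D n m B i r" by (simp add: count_ge_event_def)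
qed

lemma count_ge_event_sets:
  assumes "sets D = sets borel" "B \<in> sets borel" "i < n"
  shows "count_ge_event D n m B i r \<in> sets (sample_space D n m)"
  unfolding count_ge_event_eq_Union using pattern_event_sets[OF assms]
  by (intro sets.finite_UN) auto

lemma measure_count_ge_event:
  assumes D: "prob_space D" "sets D = sets borel" and B: "B \<in> sets borel" and i: "i < n"
  shows "measure (sample_space D n m) (count_ge_event D n m B i r) =
           binomial_tail (measure D B) {..<m} r"
proof -
  interpret S: prob_space "sample_space D n m" using D(1) by (rule prob_space_sample_space)
  let ?AA = "{A \<in> Pow {..<m}. r \<le> card A}"
  have "disjoint_family_on (pattern_event D n m B i) ?AA"
    by (auto simp: disjoint_family_on_def mem_pattern_event_iff)
  hence "measure (sample_space D n m) (\<Union>A\<in>?AA. pattern_event D n m B i A)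
      = (\<Sum>A\<in>?AA. measure (sample_space D n m) (pattern_event D n m B i A))"
    using pattern_event_sets[OF D(2) B i]
    by (simp add: S.finite_measure_finite_Union image_subset_iff)
  also have "\<dots> = binomial_tail (measure D B) {..<m} r"
    unfolding binomial_tail_def measure_pattern_event[OF D B i]
    by (subst sum.inter_filter[symmetric]) auto
  finally show ?thesis unfolding count_ge_event_eq_Union .
qed

lemma rank_pos_eq:
  assumes "bij_betw r {..<m} {..<m}" "k < m"
  shows "rank_pos m r (r k) = k"
  unfolding rank_pos_def
proof (rule the_equality)
  fix k' assume "k' < m \<and> r k' = r k"
  thus "k' = k" using assms bij_betw_imp_inj_on[OF assms(1)] by (auto dest: inj_onD)
qed (use assms in simp)

lemma profile_rank_pos_less:
  assumes "is_profile n m \<sigma>" "i < n" "j < m"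
  shows "rank_pos m (\<sigma> i) j < m"
proof -
  have bij: "bij_betw (\<sigma> i) {..<m} {..<m}" using assms unfolding is_profile_def by simp
  hence "j \<in> \<sigma> i ` {..<m}" using assms(3) bij_betw_imp_surj_on by fastforce
  then obtain k where "k < m" "j = \<sigma> i k" by auto
  thus ?thesis using rank_pos_eq[OF bij] by simp
qed

lemma utility_mem_unit:
  assumes "\<omega> \<in> {..<n} \<times> {..<m} \<rightarrow> {0..1}" "is_profile n m \<sigma>" "i < n" "j < m"
  shows "utility m \<sigma> \<omega> i j \<in> {0..1}"
  using desc_stat_mem[OF profile_rank_pos_less[OF assms(2-4)], of \<omega> i] assms(1,3)
  by (auto simp: utility_def)

lemma sw_bounds:
  assumes "\<omega> \<in> {..<n} \<times> {..<m} \<rightarrow> {0..1}" "is_profile n m \<sigma>" "j < m"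
  shows "0 \<le> sw n m \<sigma> \<omega> j" "sw n m \<sigma> \<omega> j \<le> n"
  using sum_mono[of "{..<n}" "\<lambda>i. utility m \<sigma> \<omega> i j" "\<lambda>_. 1"]
    utility_mem_unit[OF assms(1,2) _ assms(3)]
  by (auto simp: sw_def intro: sum_nonneg)

lemma distortion_bounds:
  assumes "\<omega> \<in> {..<n} \<times> {..<m} \<rightarrow> {0..1}" "is_profile n m \<sigma>" "j < m"
  shows "sw n m \<sigma> \<omega> j / n \<le> distortion n m \<sigma> \<omega> j"
    and "0 \<le> distortion n m \<sigma> \<omega> j" "distortion n m \<sigma> \<omega> j \<le> 1"
proof -
  let ?s = "sw n m \<sigma> \<omega>"
  let ?M = "Max (?s ` {..<m})"
  have le_M: "?s j \<le> ?M" using assms(3) by (intro Max_ge) auto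
  have M_le: "?M \<le> n" using assms sw_bounds(2)[OF assms(1,2)] by (subst Max_le_iff) auto
  have nonneg: "0 \<le> ?s j" by (rule sw_bounds(1)[OF assms])
  show "0 \<le> distortion n m \<sigma> \<omega> j" "distortion n m \<sigma> \<omega> j \<le> 1"
    unfolding distortion_def using le_M nonneg by (auto simp: divide_le_eq_1)
  show "?s j / n \<le> distortion n m \<sigma> \<omega> j"
  proof (cases "?M = 0")
    case True
    thus ?thesis using le_M nonneg by (simp add: distortion_def)
  next
    case False
    thus ?thesis unfolding distortion_def using le_M M_le nonneg by (intro divide_left_mono) auto
  qed
qed

lemma borel_measurable_distortion:
  assumes "sets D = sets borel" "is_profile n m \<sigma>" "j < m"
  shows "(\<lambda>\<omega>. distortion n m \<sigma> \<omega> j) \<in> borel_measurable (sample_space D n m)"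
proof -
  have sw: "(\<lambda>\<omega>. sw n m \<sigma> \<omega> j') \<in> borel_measurable (sample_space D n m)" if "j' < m" for j'
    unfolding sw_def utility_def
    using assms(1,2) that
    by (intro borel_measurable_sum borel_measurable_desc_stat profile_rank_pos_less) auto
  show ?thesis
    unfolding distortion_def using assms(3)
    by (intro borel_measurable_divide borel_measurable_Max sw) auto
qed

lemma AE_sample_space_unit:
  assumes "prob_space D" "measure D {0..1} = 1"
  shows "AE \<omega> in sample_space D n m. \<omega> \<in> {..<n} \<times> {..<m} \<rightarrow> {0..1}"
proof -
  have "AE x in D. x \<in> {0..1}"
    using assms by (intro prob_space.AE_prob_1) auto
  hence "AE \<omega> in sample_space D n m. \<forall>s\<in>{..<n} \<times> {..<m}. \<omega> s \<in> {0..1}"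
    unfolding sample_space_def using assms(1) by (intro AE_finite_allI AE_PiM_component) auto
  thus ?thesis by (simp add: Pi_iff)
qed

lemma
  assumes D: "prob_space D" "sets D = sets borel" "measure D {0..1} = 1"
    and "is_profile n m \<sigma>" "j < m"
  shows integrable_distortion: "integrable (sample_space D n m) (\<lambda>\<omega>. distortion n m \<sigma> \<omega> j)"
    and expected_dist_bounds: "0 \<le> expected_dist D n m \<sigma> j" "expected_dist D n m \<sigma> j \<le> 1"
proof -
  interpret S: prob_space "sample_space D n m" using D(1) by (rule prob_space_sample_space)
  have AE: "AE \<omega> in sample_space D n m. 0 \<le> distortion n m \<sigma> \<omega> j \<and> distortion n m \<sigma> \<omega> j \<le> 1"
    using AE_sample_space_unit[OF D(1,3)] by eventually_elim (use distortion_bounds assms in auto)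
  show int: "integrable (sample_space D n m) (\<lambda>\<omega>. distortion n m \<sigma> \<omega> j)"
    using AE borel_measurable_distortion[OF D(2) assms(4,5)]
    by (intro S.integrable_const_bound[where B=1]) auto
  show "0 \<le> expected_dist D n m \<sigma> j"
    unfolding expected_dist_def using AE by (intro integral_nonneg_AE) auto
  have "expected_dist D n m \<sigma> j \<le> (\<integral>\<omega>. 1 \<partial>sample_space D n m)"
    unfolding expected_dist_def using AE int by (intro integral_mono_AE) auto
  thus "expected_dist D n m \<sigma> j \<le> 1" by (simp add: S.prob_space)
qed

lemma sum_binom_score:
  assumes "is_profile n m \<sigma>"
  shows "(\<Sum>j<m. binom_score n m \<sigma> j) = n * (m * 2 ^ (m - 1))"
proof -
  have "(\<Sum>j<m. binom_points m (rank_pos m (\<sigma> i) j)) = m * 2 ^ (m - 1)" if "i < n" for i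
  proof -
    have bij: "bij_betw (\<sigma> i) {..<m} {..<m}" using assms that unfolding is_profile_def by simp
    have "(\<Sum>j<m. binom_points m (rank_pos m (\<sigma> i) j)) =
        (\<Sum>k<m. binom_points m (rank_pos m (\<sigma> i) (\<sigma> i k)))"
      by (rule sum.reindex_bij_betw[OF bij, symmetric])
    also have "\<dots> = (\<Sum>k<m. binom_points m k)" by (simp add: rank_pos_eq[OF bij])
    finally show ?thesis by (simp add: sum_binom_points)
  qed
  hence "(\<Sum>i<n. \<Sum>j<m. binom_points m (rank_pos m (\<sigma> i) j)) = n * (m * 2 ^ (m - 1))" by simp
  thus ?thesis unfolding binom_score_def by (subst sum.swap)
qed

lemma binom_score_winner_ge:
  assumes "is_binomial_rule n m f" "is_profile n m \<sigma>" "1 \<le> m"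
  shows "n * 2 ^ (m - 1) \<le> binom_score n m \<sigma> (f \<sigma>)"
proof -
  have "m * (n * 2 ^ (m - 1)) = (\<Sum>j<m. binom_score n m \<sigma> j)"
    using sum_binom_score[OF assms(2)] by simp
  also have "\<dots> \<le> (\<Sum>j<m. binom_score n m \<sigma> (f \<sigma>))"
    using assms(1,2) unfolding is_binomial_rule_def by (intro sum_mono) auto
  finally show ?thesis using assms(3) by simp
qed

lemma sw_ge_threshold_count:
  assumes "\<omega> \<in> {..<n} \<times> {..<m} \<rightarrow> {0..1}" "is_profile n m \<sigma>" "j < m" "0 \<le> t"
  shows "t * (\<Sum>i<n. of_bool (rank_pos m (\<sigma> i) j < card {l. l < m \<and> t < \<omega> (i, l)}))
           \<le> sw n m \<sigma> \<omega> j"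
  unfolding sw_def sum_distrib_left
proof (intro sum_mono)
  fix i assume "i \<in> {..<n}"
  hence k: "rank_pos m (\<sigma> i) j < m" and "utility m \<sigma> \<omega> i j \<in> {0..1}"
    using assms profile_rank_pos_less utility_mem_unit by auto
  moreover have "t < utility m \<sigma> \<omega> i j \<longleftrightarrow> rank_pos m (\<sigma> i) j < card {l. l < m \<and> t < \<omega> (i, l)}"
    unfolding utility_def by (rule desc_stat_upward_closed_iff[OF _ k]) auto
  ultimately show "t * of_bool (rank_pos m (\<sigma> i) j < card {l. l < m \<and> t < \<omega> (i, l)})
      \<le> utility m \<sigma> \<omega> i j"
    using assms(4) by auto
qed

lemma expected_dist_ge_binomial_tails:
  assumes D: "prob_space D" "sets D = sets borel" "measure D {0..1} = 1"
    and "0 \<le> t" "1 \<le> n" "is_profile n m \<sigma>" "j < m"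
  shows "t / n * (\<Sum>i<n. binomial_tail (measure D {t<..}) {..<m} (Suc (rank_pos m (\<sigma> i) j)))
           \<le> expected_dist D n m \<sigma> j"
proof -
  let ?S = "sample_space D n m"
  interpret S: prob_space ?S using D(1) by (rule prob_space_sample_space)
  define E where "E i = count_ge_event D n m {t<..} i (Suc (rank_pos m (\<sigma> i) j))" for i
  define g where "g \<omega> = t / n * (\<Sum>i<n. indicator (E i) \<omega>)" for \<omega>
  have E_sets: "E i \<in> sets ?S" if "i < n" for i
    unfolding E_def using D(2) that by (intro count_ge_event_sets) auto
  have int_g: "integrable ?S g"
    unfolding g_def using E_sets
    by (intro integrable_mult_right Bochner_Integration.integrable_sum integrable_real_indicator)
      (auto simp: S.emeasure_eq_measure)
  have "integral\<^sup>L ?S g = t / n * (\<Sum>i<n. measure ?S (E i))"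
    unfolding g_def using E_sets by (simp add: S.emeasure_eq_measure)
  also have "\<dots> = t / n * (\<Sum>i<n. binomial_tail (measure D {t<..}) {..<m} (Suc (rank_pos m (\<sigma> i) j)))"
    unfolding E_def by (simp add: measure_count_ge_event[OF D(1,2)])
  finally have "integral\<^sup>L ?S g = \<dots>" .
  moreover have "AE \<omega> in ?S. g \<omega> \<le> distortion n m \<sigma> \<omega> j"
    using AE_sample_space_unit[OF D(1,3)] AE_space
  proof eventually_elim
    case (elim \<omega>)
    have "g \<omega> = t / n * (\<Sum>i<n. of_bool (rank_pos m (\<sigma> i) j < card {l. l < m \<and> t < \<omega> (i, l)}))"
      using elim(2) by (simp add: g_def E_def count_ge_event_def indicator_def Suc_le_eq)
    also have "\<dots> \<le> sw n m \<sigma> \<omega> j / n"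
      using sw_ge_threshold_count[OF elim(1) assms(6,7,4)] assms(5) by (simp add: divide_right_mono)
    also have "\<dots> \<le> distortion n m \<sigma> \<omega> j" by (rule distortion_bounds(1)[OF elim(1) assms(6,7)])
    finally show ?case .
  qed
  hence "integral\<^sup>L ?S g \<le> expected_dist D n m \<sigma> j"
    unfolding expected_dist_def
    by (intro integral_mono_AE int_g integrable_distortion[OF D assms(6,7)])
  ultimately show ?thesis by simp
qed

lemma half_threshold_le_expected_dist_binomial:
  assumes D: "prob_space D" "sets D = sets borel" "measure D {0..1} = 1"
    and t: "0 \<le> t" "measure D {..t} \<le> 1/2"
    and "1 \<le> n" "1 \<le> m" "is_binomial_rule n m f" "is_profile n m \<sigma>"
  shows "t / 2 \<le> expected_dist D n m \<sigma> (f \<sigma>)"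
proof -
  interpret D: prob_space D by (fact D(1))
  define k where "k i = rank_pos m (\<sigma> i) (f \<sigma>)" for i
  have "measure D {t<..} = measure D (space D - {..t})"
    using sets_eq_imp_space_eq[OF D(2)] by (auto intro: arg_cong[where f="measure D"])
  also have "\<dots> = 1 - measure D {..t}" using D(2) by (intro D.prob_compl) auto
  finally have p: "1/2 \<le> measure D {t<..}" "measure D {t<..} \<le> 1" using t by auto
  have "(2 :: real) ^ m = 2 * 2 ^ (m - 1)" using assms(7) by (cases m) auto
  hence "t / 2 = t / n * (n * 2 ^ (m - 1)) / 2 ^ m" using assms(6) by (simp add: field_simps)
  also have "\<dots> \<le> t / n * binom_score n m \<sigma> (f \<sigma>) / 2 ^ m"
    using binom_score_winner_ge[OF assms(8,9,7)] t
    by (intro divide_right_mono mult_left_mono) (simp_all only: of_nat_le_iff, auto)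
  also have "\<dots> = t / n * (\<Sum>i<n. binom_points m (k i) / 2 ^ m)"
    by (simp add: binom_score_def k_def sum_divide_distrib[symmetric])
  also have "\<dots> = t / n * (\<Sum>i<n. binomial_tail (1/2) {..<m} (Suc (k i)))"
    by (simp add: binomial_tail_half binom_points_eq_card)
  also have "\<dots> \<le> t / n * (\<Sum>i<n. binomial_tail (measure D {t<..}) {..<m} (Suc (k i)))"
  proof -
    have "(\<Sum>i<n. binomial_tail (1/2) {..<m} (Suc (k i))) \<le>
        (\<Sum>i<n. binomial_tail (measure D {t<..}) {..<m} (Suc (k i)))"
      using p by (intro sum_mono binomial_tail_mono) auto
    thus ?thesis using t by (intro mult_left_mono) auto
  qed
  also have "\<dots> \<le> expected_dist D n m \<sigma> (f \<sigma>)"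
    unfolding k_def using assms
    by (intro expected_dist_ge_binomial_tails) (auto simp: is_binomial_rule_def)
  finally show ?thesis .
qed

lemma
  fixes D :: "real measure"
  assumes "prob_space D" "sets D = sets borel" "measure D {0..1} = 1"
  shows measure_atMost_negative: "y < 0 \<Longrightarrow> measure D {..y} = 0"
    and bdd_above_median_set: "bdd_above {y. measure D {..y} \<le> 1/2}"
proof -
  interpret D: prob_space D by (fact assms(1))
  have sp: "space D = UNIV" using sets_eq_imp_space_eq[OF assms(2)] by simp
  have "measure D (- {0..1}) = 0"
    using D.prob_compl[of "{0..1}"] assms(2,3) by (simp add: sp Compl_eq_Diff_UNIV)
  moreover have "measure D {..y} \<le> measure D (- {0..1})" if "y < 0" for y
    using that assms(2) by (intro D.finite_measure_mono) (auto simp: borel_comp)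
  ultimately show "y < 0 \<Longrightarrow> measure D {..y} = 0"
    by (simp add: measure_nonneg antisym)
  have "y \<le> 1" if "measure D {..y} \<le> 1/2" for y
    using that D.finite_measure_mono[of "{0..1}" "{..y}"] assms by (cases "y \<le> 1") auto
  thus "bdd_above {y. measure D {..y} \<le> 1/2}" by (intro bdd_aboveI) auto
qed

lemma largest_median_nonneg:
  assumes "prob_space D" "sets D = sets borel" "measure D {0..1} = 1"
  shows "0 \<le> largest_median D"
proof (rule dense_le)
  fix y :: real assume "y < 0"
  thus "y \<le> largest_median D"
    unfolding largest_median_def
    using measure_atMost_negative[OF assms] bdd_above_median_set[OF assms]
    by (intro cSup_upper) auto
qed

lemma half_largest_median_le_expected_dist_binomial:
  assumes D: "prob_space D" "sets D = sets borel" "measure D {0..1} = 1"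
    and "1 \<le> n" "1 \<le> m" "is_binomial_rule n m f" "is_profile n m \<sigma>"
  shows "largest_median D / 2 \<le> expected_dist D n m \<sigma> (f \<sigma>)"
proof -
  have "0 \<le> expected_dist D n m \<sigma> (f \<sigma>)"
    using assms expected_dist_bounds(1) by (auto simp: is_binomial_rule_def)
  hence "s \<le> 2 * expected_dist D n m \<sigma> (f \<sigma>)" if "measure D {..s} \<le> 1/2" for s
    using half_threshold_le_expected_dist_binomial[OF D _ that assms(4-7)] by (cases "0 \<le> s") auto
  moreover have "measure D {..-1} \<le> 1/2" using measure_atMost_negative[OF D, of "-1"] by simp
  ultimately have "largest_median D \<le> 2 * expected_dist D n m \<sigma> (f \<sigma>)"
    unfolding largest_median_def by (intro cSup_least) auto
  thus ?thesis by simp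
qed

lemma edm_rule_binomial:
  assumes D: "prob_space D" "sets D = sets borel" "measure D {0..1} = 1"
    and "c \<le> 1/2" "1 \<le> n" "1 \<le> m" "is_binomial_rule n m f"
  shows "edm_rule D n m (c * largest_median D) f"
  unfolding edm_rule_def
proof (intro allI impI)
  fix \<sigma> assume \<sigma>: "is_profile n m \<sigma>"
  let ?E = "expected_dist D n m \<sigma>"
  have "{..<m} \<noteq> {}" using assms(6) by (auto simp: lessThan_empty_iff)
  hence M: "0 \<le> Max (?E ` {..<m})" "Max (?E ` {..<m}) \<le> 1"
    using expected_dist_bounds[OF D \<sigma>] by (auto simp: Max_ge_iff)
  have "c * largest_median D * Max (?E ` {..<m}) = c * (largest_median D * Max (?E ` {..<m}))"
    by (rule mult.assoc)
  also have "\<dots> \<le> 1/2 * (largest_median D * Max (?E ` {..<m}))"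
    using M largest_median_nonneg[OF D] assms(4) by (intro mult_right_mono) auto
  also have "\<dots> \<le> largest_median D / 2"
    using M largest_median_nonneg[OF D] mult_left_le by auto
  also have "\<dots> \<le> ?E (f \<sigma>)"
    using half_largest_median_le_expected_dist_binomial[OF D assms(5-7) \<sigma>] .
  finally show "c * largest_median D * Max (?E ` {..<m}) \<le> ?E (f \<sigma>)" .
qed

theorem corollary1:
  fixes D :: "real measure"
  assumes "prob_space D"
    and "sets D = sets borel"
    and "measure D {0..1} = 1"
  shows "(\<forall>\<epsilon>>0. \<exists>n0. \<forall>n\<ge>n0. \<forall>m\<ge>1. \<forall>f. is_binomial_rule n m f \<longrightarrow>
             edm_rule D n m ((1/2 - \<epsilon>) * largest_median D) f)
       \<and> ((continuous_on UNIV (cdf_of D)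
            \<and> (\<forall>x\<in>{0<..<1}. cdf_of D differentiable at x)
            \<and> continuous_on {0<..<1} (deriv (cdf_of D))
            \<and> (INF x\<in>{0<..<1}. deriv (cdf_of D) x) > 0)
          \<longrightarrow> (\<forall>\<epsilon>>0. \<exists>m0. \<forall>m\<ge>m0. \<forall>n\<ge>1. \<forall>f. is_binomial_rule n m f \<longrightarrow>
             edm_rule D n m ((1/2 - \<epsilon>) * largest_median D) f))"
proof -
  have "edm_rule D n m ((1/2 - \<epsilon>) * largest_median D) f"
    if "\<epsilon> > 0" "1 \<le> n" "1 \<le> m" "is_binomial_rule n m f" for \<epsilon> n m f
    using edm_rule_binomial[OF assms _ that(2-4)] that(1) by simp
  \<comment> \<open>the bound is uniform in all n, m \<ge> 1\<close>
  thus ?thesis by (intro conjI impI allI exI[of _ 1]) auto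
qed

end
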